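(* For every positive integer $n$, $$\overline{\mathrm{spt}}_{\omega}(n)\equiv\overline{\mathrm{spt}}(n)\equiv\begin{cases}1\pmod 2 & \text{if } n=k^2 \text{ or } n=2k^2 \text{ for some integer } k,\\ 0\pmod 2&\text{otherwise.}\end{cases}$$
   Context: $(a;q)_n=\prod_{j=0}^{n-1}(1-aq^j)$, $(a;q)_\infty=\prod_{j\ge0}(1-aq^j)$. $\overline{\mathrm{spt}}(n)$ is defined by $\sum_{n\ge1}\overline{\mathrm{spt}}(n)q^n=\sum_{n\ge1}\frac{q^n(-q^{n+1};q)_\infty}{(1-q^n)^2(q^{n+1};q)_\infty}$ (the number of smallest parts in overpartitions of $n$ whose smallest part is overlined). $\overline{\mathrm{spt}}_{\omega}(n)$ is defined by $\sum_{n\ge1}\overline{\mathrm{spt}}_{\omega}(n)q^n=\sum_{n\ge1}\frac{q^{n}(-q^{n+1};q)_{n}(-q^{2n+2};q^2)_{\infty}}{(1-q^n)^2(q^{n+1};q)_n(q^{2n+2};q^2)_{\infty}}$ (the number of smallest parts in overpartitions of $n$ with smallest part overlined and all odd parts less than twice the smallest part). *)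

theory Defs
  imports Main "HOL-Library.Multiset"
begin

text \<open>An overpartition of n is encoded as a pair (p, ov): p is a partition of n
  (a multiset of positive integers with sum n) and ov is the set of part sizes
  whose first occurrence is overlined (so ov is a subset of the set of parts).\<close>

definition overpartitions :: "nat \<Rightarrow> (nat multiset \<times> nat set) set" where
  "overpartitions n = {(p, ov). (\<forall>x \<in># p. 0 < x) \<and> sum_mset p = n \<and> ov \<subseteq> set_mset p}"

definition spart :: "nat multiset \<Rightarrow> nat" where
  "spart p = Min (set_mset p)"

definition sptbar :: "nat \<Rightarrow> nat" where
  "sptbar n = (\<Sum>(p, ov) \<in> {(p, ov) \<in> overpartitions n. p \<noteq> {#} \<and> spart p \<in> ov}.
                 count p (spart p))"

definition sptbar_omega :: "nat \<Rightarrow> nat" where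
  "sptbar_omega n = (\<Sum>(p, ov) \<in> {(p, ov) \<in> overpartitions n. p \<noteq> {#} \<and> spart p \<in> ov
                         \<and> (\<forall>x \<in># p. odd x \<longrightarrow> x < 2 * spart p)}.
                 count p (spart p))"

end

theory Submission
  imports Defs
begin

text \<open>Fix a partition p of n with smallest part s and j distinct part sizes. Overlining s
  together with any subset of the other j - 1 part sizes gives 2^(j-1) overpartitions, each
  contributing the multiplicity of s; so modulo 2 only the partitions s + ... + s with a single part
  size survive, and they contribute the sum of n/s over the divisors s of n, i.e. sigma(n). These
  partitions satisfy the omega-condition, so both functions are congruent to sigma(n), hence to the
  number of odd divisors of n. That number does not change when n is doubled, and for odd n the
  involution d -> n/d of the divisors has a fixed point exactly when n is a square.\<close>

lemma card_mod_2_eq_card_fixpoints: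
  assumes "finite A" and "\<And>x. x \<in> A \<Longrightarrow> f x \<in> A" and "\<And>x. x \<in> A \<Longrightarrow> f (f x) = x"
  shows "card A mod 2 = card {x\<in>A. f x = x} mod 2"
  using assms
proof (induction "card A" arbitrary: A rule: less_induct)
  case less
  show ?case
  proof (cases "\<exists>x\<in>A. f x \<noteq> x")
    case False
    then have "{x\<in>A. f x = x} = A" by auto
    then show ?thesis by simp
  next
    case True
    then obtain x where x: "x \<in> A" "f x \<noteq> x" by blast
    define A' where "A' = A - {x, f x}"
    have pair: "{x, f x} \<subseteq> A" "card {x, f x} = 2"
      using x less.prems(2) by auto
    then have card_A: "card A = card A' + 2"
      using card_Diff_subset[OF _ pair(1)] card_mono[OF less.prems(1) pair(1)]
      by (simp add: A'_def)
    have closed: "f y \<in> A'" if "y \<in> A'" for y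
    proof -
      have y: "y \<in> A" "y \<noteq> x" "y \<noteq> f x" using that by (auto simp: A'_def)
      then have "f (f y) = y" "f (f x) = x" using less.prems(3) x(1) by auto
      with y less.prems(2) show ?thesis by (auto simp: A'_def)
    qed
    have "card A' mod 2 = card {y\<in>A'. f y = y} mod 2"
      using less.hyps[of A'] card_A closed less.prems(1,3) by (simp add: A'_def)
    moreover have "{y\<in>A'. f y = y} = {y\<in>A. f y = y}"
      using x less.prems(3) by (auto simp: A'_def)
    ultimately show ?thesis using card_A by simp
  qed
qed

definition square_or_twice_square :: "nat \<Rightarrow> bool" where
  "square_or_twice_square n \<longleftrightarrow> (\<exists>k. n = k^2 \<or> n = 2 * k^2)"

lemma square_or_twice_square_int_iff:
  "(\<exists>k::int. int n = k^2 \<or> int n = 2 * k^2) \<longleftrightarrow> square_or_twice_square n"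
proof
  assume "\<exists>k::int. int n = k^2 \<or> int n = 2 * k^2"
  then obtain k :: int where "int n = \<bar>k\<bar>^2 \<or> int n = 2 * \<bar>k\<bar>^2" by auto
  then have "n = (nat \<bar>k\<bar>)^2 \<or> n = 2 * (nat \<bar>k\<bar>)^2"
    by (metis nat_int nat_mult_distrib nat_numeral nat_power_eq zero_le_numeral abs_ge_zero)
  then show "square_or_twice_square n" unfolding square_or_twice_square_def by blast
qed (auto simp: square_or_twice_square_def)

lemma square_or_twice_square_double:
  "square_or_twice_square (2 * m) \<longleftrightarrow> square_or_twice_square m"
proof
  assume "square_or_twice_square (2 * m)"
  then obtain k where "2 * m = k^2 \<or> m = k^2" unfolding square_or_twice_square_def by auto
  then show "square_or_twice_square m"
  proof
    assume twice: "2 * m = k^2"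
    then have "even k" by (metis dvd_triv_left even_power)
    then obtain j where "k = 2 * j" by blast
    with twice have "m = 2 * j^2" by (simp add: power2_eq_square)
    then show ?thesis unfolding square_or_twice_square_def by blast
  qed (auto simp: square_or_twice_square_def)
next
  assume "square_or_twice_square m"
  then obtain k where "m = k^2 \<or> m = 2 * k^2" unfolding square_or_twice_square_def by blast
  then have "2 * m = 2 * k^2 \<or> 2 * m = (2 * k)^2" by (auto simp: power2_eq_square)
  then show "square_or_twice_square (2 * m)" unfolding square_or_twice_square_def by blast
qed

lemma square_or_twice_square_odd:
  "odd n \<Longrightarrow> square_or_twice_square n \<longleftrightarrow> (\<exists>k. n = k^2)"
  unfolding square_or_twice_square_def by (metis dvd_triv_left)

lemma odd_divisors_double: "{d. d dvd 2 * m \<and> odd d} = {d::nat. d dvd m \<and> odd d}"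
  by (auto simp: coprime_dvd_mult_right_iff)

lemma card_divisors_self_div_eq:
  fixes n :: nat
  assumes "n > 0"
  shows "card {d. d dvd n \<and> n div d = d} = (if \<exists>k. n = k^2 then 1 else 0)"
proof -
  have "d dvd n \<and> n div d = d \<longleftrightarrow> n = d^2" for d
  proof
    assume "d dvd n \<and> n div d = d"
    then show "n = d^2"
      using dvd_mult_div_cancel[of d n] by (simp add: power2_eq_square)
  next
    assume "n = d^2"
    with assms show "d dvd n \<and> n div d = d" by (simp add: power2_eq_square)
  qed
  then have eq: "{d. d dvd n \<and> n div d = d} = {d. n = d^2}" by blast
  show ?thesis
  proof (cases "\<exists>k. n = k^2")
    case True
    then obtain k where "n = k^2" by blast
    then have "{d. n = d^2} = {k}" by (auto simp: power2_eq_iff_nonneg)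
    with True show ?thesis by (simp add: eq)
  qed (simp add: eq)
qed

lemma
  fixes n d :: nat
  assumes "n > 0" and "d dvd n"
  shows complement_divisor_dvd: "n div d dvd n"
    and complement_divisor_div: "n div (n div d) = d"
proof -
  from assms(2) obtain k where "n = d * k" ..
  with assms(1) show "n div d dvd n" "n div (n div d) = d" by auto
qed

lemma card_odd_divisors_mod_2:
  "n > 0 \<Longrightarrow> card {d. d dvd n \<and> odd d} mod 2 = (if square_or_twice_square n then 1 else 0)"
proof (induction n rule: less_induct)
  case (less n)
  show ?case
  proof (cases "even n")
    case True
    then obtain m where m: "n = 2 * m" by blast
    with less.prems have "m < n" "m > 0" by auto
    then show ?thesis
      using less.IH m by (simp add: odd_divisors_double square_or_twice_square_double)
  next
    case False
    have all_odd: "{d. d dvd n \<and> odd d} = {d. d dvd n}"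
      using False by (auto dest: dvd_trans)
    have "card {d. d dvd n \<and> odd d} mod 2 = card {d \<in> {d. d dvd n}. n div d = d} mod 2"
      unfolding all_odd using less.prems
      by (intro card_mod_2_eq_card_fixpoints) (simp_all add: complement_divisor_dvd complement_divisor_div)
    also have "\<dots> = (if \<exists>k. n = k^2 then 1 else 0)"
      using card_divisors_self_div_eq[OF less.prems] by simp
    finally show ?thesis
      using square_or_twice_square_odd[OF False] by simp
  qed
qed

lemma sum_mod_2_eq_card_odd:
  fixes A :: "nat set"
  assumes "finite A"
  shows "(\<Sum>d\<in>A. d) mod 2 = card {d\<in>A. odd d} mod 2"
proof -
  have "(\<Sum>d\<in>A. d) mod 2 = (\<Sum>d\<in>A. d mod 2) mod 2"
    by (rule mod_sum_eq[symmetric])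
  also have "(\<Sum>d\<in>A. d mod 2) = (\<Sum>d\<in>A. if odd d then 1 else 0)"
    by (rule sum.cong) presburger+
  also have "\<dots> = card {d\<in>A. odd d}"
    using assms by (simp add: sum.inter_filter[symmetric])
  finally show ?thesis .
qed

lemma sum_divisors_self_div: "(\<Sum>d | d dvd n. n div d) = (\<Sum>d | d dvd (n::nat). d)"
proof (cases "n = 0")
  case False
  then show ?thesis
    by (intro sum.reindex_bij_witness[of _ "(div) n" "(div) n"])
      (simp_all add: complement_divisor_dvd complement_divisor_div)
qed simp

definition partitions :: "nat \<Rightarrow> nat multiset set" where
  "partitions n = {p. (\<forall>x\<in>#p. 0 < x) \<and> sum_mset p = n}"

lemma member_le_sum_mset: "x \<in># p \<Longrightarrow> x \<le> sum_mset (p :: nat multiset)"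
  by (induction p) auto

lemma size_le_sum_mset: "(\<forall>x\<in>#p. 0 < x) \<Longrightarrow> size p \<le> sum_mset (p :: nat multiset)"
  by (induction p) auto

lemma finite_partitions: "finite (partitions n)"
proof (rule finite_subset)
  show "partitions n \<subseteq> (\<Union>k\<le>n. multisets_of_size {1..n} k)"
    using member_le_sum_mset size_le_sum_mset
    by (fastforce simp: partitions_def multisets_of_size_def)
qed auto

lemma spart_in: "p \<noteq> {#} \<Longrightarrow> spart p \<in># p"
  unfolding spart_def by simp

lemma spart_replicate_mset: "m > 0 \<Longrightarrow> spart (replicate_mset m s) = s"
  unfolding spart_def by simp

lemma replicate_mset_if_set_mset_eq_singleton:
  "set_mset p = {s} \<Longrightarrow> p = replicate_mset (count p s) s"
  by (rule multiset_eqI) (auto simp: count_eq_zero_iff)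

lemma single_size_partition_eq_replicate_mset:
  assumes "p \<in> partitions n" and "card (set_mset p) = 1"
  obtains s where "s > 0" "s dvd n" "p = replicate_mset (n div s) s"
proof -
  from assms obtain s where s: "set_mset p = {s}" "s > 0"
    by (auto simp: partitions_def card_1_singleton_iff)
  have p: "p = replicate_mset (count p s) s"
    using s(1) by (rule replicate_mset_if_set_mset_eq_singleton)
  have "n = count p s * s"
    using assms(1) arg_cong[OF p, of sum_mset] by (simp add: partitions_def)
  then show thesis
    using s(2) p by (intro that[of s]) simp_all
qed

lemma sum_single_size_partitions:
  assumes "n > 0"
  shows "(\<Sum>p\<in>{p \<in> partitions n. card (set_mset p) = 1}. count p (spart p))
       = (\<Sum>d | d dvd n. n div d)"
proof (rule sum.reindex_bij_witness[where j = spart and i = "\<lambda>s. replicate_mset (n div s) s"])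
  fix p assume "p \<in> {p \<in> partitions n. card (set_mset p) = 1}"
  then obtain s where "s > 0" "s dvd n" "p = replicate_mset (n div s) s"
    using single_size_partition_eq_replicate_mset by blast
  with assms show "replicate_mset (n div spart p) (spart p) = p" "spart p \<in> {d. d dvd n}"
    "n div spart p = count p (spart p)"
    by (auto simp: spart_replicate_mset elim!: dvdE)
next
  fix s assume "s \<in> {d. d dvd n}"
  then obtain k where "n = s * k" by blast
  with assms show "spart (replicate_mset (n div s) s) = s"
    "replicate_mset (n div s) s \<in> {p \<in> partitions n. card (set_mset p) = 1}"
    by (auto simp: spart_replicate_mset partitions_def)
qed

lemma card_supersets_containing:
  assumes "finite X" and "a \<in> X"
  shows "card {B. a \<in> B \<and> B \<subseteq> X} = 2 ^ (card X - 1)"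
proof -
  have "{B. a \<in> B \<and> B \<subseteq> X} = insert a ` Pow (X - {a})"
  proof (intro set_eqI iffI)
    fix B assume "B \<in> {B. a \<in> B \<and> B \<subseteq> X}"
    then show "B \<in> insert a ` Pow (X - {a})"
      by (intro image_eqI[of _ _ "B - {a}"]) auto
  qed (use assms(2) in auto)
  moreover have "inj_on (insert a) (Pow (X - {a}))"
    by (rule inj_onI) blast
  ultimately show ?thesis
    using assms by (simp add: card_image card_Pow)
qed

lemma sum_pow2_mult_mod_2:
  fixes f g :: "'a \<Rightarrow> nat"
  assumes "finite A"
  shows "(\<Sum>x\<in>A. 2 ^ g x * f x) mod 2 = (\<Sum>x\<in>{x\<in>A. g x = 0}. f x) mod 2"
proof -
  have "(\<Sum>x\<in>A. 2 ^ g x * f x) mod 2 = (\<Sum>x\<in>A. 2 ^ g x * f x mod 2) mod 2"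
    by (rule mod_sum_eq[symmetric])
  also have "(\<Sum>x\<in>A. 2 ^ g x * f x mod 2) = (\<Sum>x\<in>A. (if g x = 0 then f x else 0) mod 2)"
  proof (rule sum.cong[OF refl])
    fix x show "2 ^ g x * f x mod 2 = (if g x = 0 then f x else 0) mod 2"
      by (cases "g x") simp_all
  qed
  also have "(\<Sum>x\<in>A. (if g x = 0 then f x else 0) mod 2) mod 2 = (\<Sum>x\<in>A. if g x = 0 then f x else 0) mod 2"
    by (rule mod_sum_eq)
  also have "(\<Sum>x\<in>A. if g x = 0 then f x else 0) = (\<Sum>x\<in>{x\<in>A. g x = 0}. f x)"
    using assms by (simp add: sum.inter_filter)
  finally show ?thesis .
qed

lemma smallest_overlined_eq_Sigma:
  "{(p, ov) \<in> overpartitions n. p \<noteq> {#} \<and> spart p \<in> ov \<and> P p}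
   = Sigma {p \<in> partitions n. p \<noteq> {#} \<and> P p} (\<lambda>p. {ov. spart p \<in> ov \<and> ov \<subseteq> set_mset p})"
  by (auto simp: overpartitions_def partitions_def)

lemma sum_smallest_overlined_mod_2:
  fixes P :: "nat multiset \<Rightarrow> bool"
  assumes "n > 0" and P: "\<And>m s. m > 0 \<Longrightarrow> s > 0 \<Longrightarrow> P (replicate_mset m s)"
  shows "(\<Sum>(p, ov) \<in> {(p, ov) \<in> overpartitions n. p \<noteq> {#} \<and> spart p \<in> ov \<and> P p}.
            count p (spart p)) mod 2
       = (\<Sum>d | d dvd n. d) mod 2"
proof -
  define A where "A = {p \<in> partitions n. p \<noteq> {#} \<and> P p}"
  have "finite A"
    using finite_partitions by (simp add: A_def)
  have "(\<Sum>(p, ov) \<in> {(p, ov) \<in> overpartitions n. p \<noteq> {#} \<and> spart p \<in> ov \<and> P p}.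
            count p (spart p))
      = (\<Sum>p\<in>A. \<Sum>ov | spart p \<in> ov \<and> ov \<subseteq> set_mset p. count p (spart p))"
    unfolding smallest_overlined_eq_Sigma A_def[symmetric]
    by (rule sum.Sigma[symmetric]) (auto intro: \<open>finite A\<close> finite_subset[of _ "Pow _"])
  also have "\<dots> = (\<Sum>p\<in>A. 2 ^ (card (set_mset p) - 1) * count p (spart p))"
    by (rule sum.cong[OF refl]) (simp add: A_def card_supersets_containing spart_in)
  finally have "(\<Sum>(p, ov) \<in> {(p, ov) \<in> overpartitions n. p \<noteq> {#} \<and> spart p \<in> ov \<and> P p}.
            count p (spart p)) mod 2
      = (\<Sum>p\<in>{p\<in>A. card (set_mset p) - 1 = 0}. count p (spart p)) mod 2"
    using sum_pow2_mult_mod_2[OF \<open>finite A\<close>] by simp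
  also have "{p\<in>A. card (set_mset p) - 1 = 0} = {p \<in> partitions n. card (set_mset p) = 1}"
  proof (intro set_eqI iffI)
    fix p assume "p \<in> {p \<in> partitions n. card (set_mset p) = 1}"
    moreover from this obtain s where "s > 0" "s dvd n" "p = replicate_mset (n div s) s"
      using single_size_partition_eq_replicate_mset by blast
    moreover have "n div s > 0"
      using \<open>n > 0\<close> \<open>s dvd n\<close> by (auto elim: dvdE)
    ultimately show "p \<in> {p\<in>A. card (set_mset p) - 1 = 0}"
      using P by (auto simp: A_def)
  qed (auto simp: A_def le_Suc_eq)
  finally show ?thesis
    using sum_single_size_partitions[OF \<open>n > 0\<close>] sum_divisors_self_div by simp
qed

theorem theorem1p6:
  fixes n :: nat
  assumes "n \<ge> 1"
  shows "sptbar_omega n mod 2 = (if \<exists>k::int. int n = k^2 \<or> int n = 2 * k^2 then 1 else 0)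
       \<and> sptbar n mod 2 = (if \<exists>k::int. int n = k^2 \<or> int n = 2 * k^2 then 1 else 0)"
proof -
  have "n > 0" using assms by simp
  have sigma: "(\<Sum>d | d dvd n. d) mod 2 = (if square_or_twice_square n then 1 else 0)"
    using sum_mod_2_eq_card_odd[of "{d. d dvd n}"] card_odd_divisors_mod_2[OF \<open>n > 0\<close>] \<open>n > 0\<close>
    by simp
  have "sptbar_omega n mod 2 = (\<Sum>d | d dvd n. d) mod 2"
    unfolding sptbar_omega_def
    by (rule sum_smallest_overlined_mod_2) (simp_all add: \<open>n > 0\<close> spart_replicate_mset)
  moreover have "sptbar n mod 2 = (\<Sum>d | d dvd n. d) mod 2"
    using sum_smallest_overlined_mod_2[OF \<open>n > 0\<close>, of "\<lambda>_. True"] by (simp add: sptbar_def)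
  ultimately show ?thesis
    using sigma by (simp add: square_or_twice_square_int_iff)
qed

end
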